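(* In the setting below, suppose the graph $\mathcal G_{el}$ is connected and for every $i\in\mathcal D$ the gains satisfy $k^C_{1,i}<1$, $k^C_{2,i}<R^C_{ti}$, $k^C_{3,i}>0$. Then the origin of the linear system $\dot{\mathbf x}=\mathbf F^C\mathbf x$, $\mathbf x\in\mathbb{R}^{3N}$, is asymptotically stable.
   Context: Let $N\ge1$, $\mathcal D=\{1,\dots,N\}$, $\mathcal G_{el}$ an undirected graph on $\mathcal D$ with neighbor sets $\mathcal N_i$; for each $i$ let $C_{ti},L^C_{ti},R^C_{ti},R_{Li}>0$, and for each edge $R_{ij}=R_{ji}>0$. Let $e_1=(1,0,0)^T$, $F_i^C=\begin{bmatrix}0&\frac{1}{C_{ti}}&0\\ \frac{k^C_{1,i}-1}{L^C_{ti}}&\frac{k^C_{2,i}-R^C_{ti}}{L^C_{ti}}&\frac{k^C_{3,i}}{L^C_{ti}}\\ 0&-1&0\end{bmatrix}$. $\mathbf F^C\in\mathbb{R}^{3N\times3N}$ has $(i,i)$ block $F_i^C-\Big(\frac{1}{R_{Li}C_{ti}}+\sum_{j\in\mathcal N_i}\frac{1}{R_{ij}C_{ti}}\Big)e_1e_1^T$ and $(i,j)$ block ($j\neq i$) equal to $\frac{1}{R_{ij}C_{ti}}e_1e_1^T$ if $j\in\mathcal N_i$, $0$ otherwise. (This is the closed-loop dynamics of $N$ current-controlled converter units with PI-type state feedback, with exogenous inputs set to zero.) *)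

theory Defs
  imports "HOL-Analysis.Analysis" "HOL-Library.Numeral_Type"
begin

text \<open>Units are indexed by a finite type 'n (so N = CARD('n) >= 1); each unit has three
states indexed by the type 3 (components 0, 1, 2). The full state lives in
real ^ ('n \<times> 3), i.e. R^{3N}.\<close>

definition blockF :: "real \<Rightarrow> real \<Rightarrow> real \<Rightarrow> real \<Rightarrow> real \<Rightarrow> real \<Rightarrow> 3 \<Rightarrow> 3 \<Rightarrow> real" where
  "blockF Ct Lt Rt k1 k2 k3 a b =
     (if a = 0 \<and> b = 1 then 1 / Ct
      else if a = 1 \<and> b = 0 then (k1 - 1) / Lt
      else if a = 1 \<and> b = 1 then (k2 - Rt) / Lt
      else if a = 1 \<and> b = 2 then k3 / Lt
      else if a = 2 \<and> b = 1 then -1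
      else 0)"

text \<open>The closed-loop matrix F^C. E is the (symmetric, irreflexive) edge relation of G_el,
so the neighbour set N_i is {j. E i j}.\<close>
definition FC :: "('n::finite \<Rightarrow> 'n \<Rightarrow> bool) \<Rightarrow> ('n \<Rightarrow> real) \<Rightarrow> ('n \<Rightarrow> real) \<Rightarrow> ('n \<Rightarrow> real)
    \<Rightarrow> ('n \<Rightarrow> real) \<Rightarrow> ('n \<Rightarrow> 'n \<Rightarrow> real)
    \<Rightarrow> ('n \<Rightarrow> real) \<Rightarrow> ('n \<Rightarrow> real) \<Rightarrow> ('n \<Rightarrow> real) \<Rightarrow> real ^ ('n \<times> 3) ^ ('n \<times> 3)" where
  "FC E Ct Lt Rt RL R k1 k2 k3 =
     (\<chi> p q. let i = fst p; a = snd p; j = fst q; b = snd q in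
        if i = j then
          blockF (Ct i) (Lt i) (Rt i) (k1 i) (k2 i) (k3 i) a b
          - (if a = 0 \<and> b = 0
             then 1 / (RL i * Ct i) + (\<Sum>l\<in>{l. E i l}. 1 / (R i l * Ct i))
             else 0)
        else if E i j \<and> a = 0 \<and> b = 0 then 1 / (R i j * Ct i) else 0)"

definition lin_solution :: "real ^ 'm ^ 'm \<Rightarrow> (real \<Rightarrow> real ^ 'm) \<Rightarrow> bool" where
  "lin_solution A x \<longleftrightarrow>
     (\<forall>t\<ge>0. (x has_vector_derivative (A *v x t)) (at t within {0..}))"

definition asymptotically_stable_origin :: "real ^ 'm ^ 'm \<Rightarrow> bool" where
  "asymptotically_stable_origin A \<longleftrightarrow>
     (\<forall>\<epsilon>>0. \<exists>\<delta>>0. \<forall>x. lin_solution A x \<and> norm (x 0) < \<delta> \<longrightarrow> (\<forall>t\<ge>0. norm (x t) < \<epsilon>))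
     \<and> (\<exists>\<delta>>0. \<forall>x. lin_solution A x \<and> norm (x 0) < \<delta> \<longrightarrow> (x \<longlongrightarrow> 0) at_top)"

end

theory Submission
  imports Defs
begin

text \<open>Write a = 1 - k1 > 0 and b = Rt - k2 > 0. For a unit with capacitor voltage v, inductor
current c and integrator state z, the stored energy C v^2/2 + (L c^2 + k3 z^2)/(2a) changes along
the closed loop at rate -v^2/RL - b c^2/a plus the power exchanged with the lines, and the lines
contribute -(v_i - v_j)^2/R_ij per edge in total. This dissipation does not see z; subtracting the
small cross term e L c z/a from each unit's energy keeps the energy positive definite and makes
the dissipation negative definite. The resulting quadratic Lyapunov function W satisfies
W' <= -k W, so every solution decays exponentially.\<close>

section \<open>A quadratic Lyapunov criterion for linear systems\<close>

lemma exp_decay_of_derivative_le: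
  fixes h h' :: "real \<Rightarrow> real"
  assumes deriv: "\<And>s. 0 \<le> s \<Longrightarrow> (h has_real_derivative h' s) (at s within {0..})"
    and decrease: "\<And>s. 0 \<le> s \<Longrightarrow> h' s \<le> - K * h s"
    and "0 \<le> t"
  shows "h t \<le> exp (- K * t) * h 0"
proof -
  define G where "G s = exp (K * s) * h s" for s
  define G' where "G' s = exp (K * s) * (K * h s + h' s)" for s
  have "(G has_real_derivative G' s) (at s within {0..t})" if "0 \<le> s" for s
  proof -
    have "(h has_real_derivative h' s) (at s within {0..t})"
      using deriv[OF that] by (rule has_field_derivative_subset) auto
    then show ?thesis
      unfolding G_def G'_def by (auto intro!: derivative_eq_intros simp: algebra_simps)
  qed
  then obtain \<xi> where \<xi>: "0 \<le> \<xi>" "G t - G 0 = G' \<xi> * t"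
    using mvt_very_simple[of 0 t G "\<lambda>s. (*) (G' s)"] \<open>0 \<le> t\<close>
    by (auto simp: has_field_derivative_def)
  moreover have "G' \<xi> \<le> 0"
    using decrease[OF \<xi>(1)] unfolding G'_def by (simp add: mult_nonneg_nonpos)
  ultimately have "G t \<le> G 0"
    using mult_nonpos_nonneg[of "G' \<xi>" t] \<open>0 \<le> t\<close> by linarith
  then have "exp (K * t) * h t \<le> h 0"
    unfolding G_def by simp
  then show ?thesis
    by (simp add: exp_minus field_simps)
qed

lemma lin_solution_has_derivative_comp:
  assumes "lin_solution A y" "0 \<le> s" "\<And>x. (W has_derivative W' x) (at x)"
  shows "((\<lambda>t. W (y t)) has_real_derivative W' (y s) (A *v y s)) (at s within {0..})"
proof -
  have "(y has_vector_derivative A *v y s) (at s within {0..})"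
    using assms(1,2) unfolding lin_solution_def by simp
  from vector_derivative_diff_chain_within[OF this has_derivative_at_withinI[OF assms(3)]]
  show ?thesis
    by (simp add: o_def has_real_derivative_iff_has_vector_derivative)
qed

lemma quadratic_bounds_pos:
  fixes W :: "real ^ 'm \<Rightarrow> real"
  assumes "\<And>x. m * (norm x)\<^sup>2 \<le> W x" "\<And>x. W x \<le> M * (norm x)\<^sup>2" "0 < m"
  shows "0 < M"
  using assms(1,2)[of "axis undefined 1"] \<open>0 < m\<close> by simp

lemma lyapunov_exp_bound:
  fixes A :: "real ^ 'm ^ 'm" and W :: "real ^ 'm \<Rightarrow> real"
  assumes lower: "\<And>x. m * (norm x)\<^sup>2 \<le> W x" and upper: "\<And>x. W x \<le> M * (norm x)\<^sup>2"
    and deriv: "\<And>x. (W has_derivative W' x) (at x)"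
    and dissipation: "\<And>x. W' x (A *v x) \<le> - k * (norm x)\<^sup>2"
    and "0 < m" "0 < k" "lin_solution A y" "0 \<le> t"
  shows "m * (norm (y t))\<^sup>2 \<le> exp (- (k / M) * t) * (M * (norm (y 0))\<^sup>2)"
proof -
  have "0 < M"
    using lower upper \<open>0 < m\<close> by (rule quadratic_bounds_pos)
  have "W' x (A *v x) \<le> - (k / M) * W x" for x
  proof -
    have "(k / M) * W x \<le> (k / M) * (M * (norm x)\<^sup>2)"
      using upper \<open>0 < k\<close> \<open>0 < M\<close> by (intro mult_left_mono) auto
    then show ?thesis using dissipation[of x] \<open>0 < M\<close> by simp
  qed
  then have "W (y t) \<le> exp (- (k / M) * t) * W (y 0)"
    using lin_solution_has_derivative_comp[OF \<open>lin_solution A y\<close> _ deriv]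
    by (intro exp_decay_of_derivative_le[OF _ _ \<open>0 \<le> t\<close>])
  also have "\<dots> \<le> exp (- (k / M) * t) * (M * (norm (y 0))\<^sup>2)"
    using upper by (intro mult_left_mono) auto
  finally show ?thesis using lower[of "y t"] by linarith
qed

lemma exp_neg_mult_tendsto_zero:
  assumes "0 < c" shows "((\<lambda>t. exp (- c * t)) \<longlongrightarrow> (0::real)) at_top"
proof -
  have "LIM t at_top. - c * t :> at_bot"
    using assms by (intro filterlim_tendsto_neg_mult_at_bot[OF tendsto_const] filterlim_ident) simp
  then show ?thesis by (rule filterlim_compose[OF exp_at_bot])
qed

lemma asymptotically_stable_originI:
  fixes A :: "real ^ 'm ^ 'm" and W :: "real ^ 'm \<Rightarrow> real"
  assumes lower: "\<And>x. m * (norm x)\<^sup>2 \<le> W x" and upper: "\<And>x. W x \<le> M * (norm x)\<^sup>2"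
    and deriv: "\<And>x. (W has_derivative W' x) (at x)"
    and dissipation: "\<And>x. W' x (A *v x) \<le> - k * (norm x)\<^sup>2"
    and "0 < m" "0 < k"
  shows "asymptotically_stable_origin A"
proof -
  note bound = lyapunov_exp_bound[OF lower upper deriv dissipation \<open>0 < m\<close> \<open>0 < k\<close>]
  have "0 < M"
    using lower upper \<open>0 < m\<close> by (rule quadratic_bounds_pos)
  have norm_le: "(norm (y t))\<^sup>2 \<le> exp (- (k / M) * t) * (M / m * (norm (y 0))\<^sup>2)"
    if "lin_solution A y" "0 \<le> t" for y t
    using bound[OF that] \<open>0 < m\<close> by (simp add: field_simps)
  have stable: "\<exists>\<delta>>0. \<forall>y. lin_solution A y \<and> norm (y 0) < \<delta> \<longrightarrow> (\<forall>t\<ge>0. norm (y t) < \<epsilon>)"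
    if "0 < \<epsilon>" for \<epsilon>
  proof (intro exI[of _ "\<epsilon> * sqrt (m / M)"] conjI allI impI)
    show "0 < \<epsilon> * sqrt (m / M)" using \<open>0 < \<epsilon>\<close> \<open>0 < m\<close> \<open>0 < M\<close> by simp
    fix y t assume y: "lin_solution A y \<and> norm (y 0) < \<epsilon> * sqrt (m / M)" and "0 \<le> (t::real)"
    have "M / m * (norm (y 0))\<^sup>2 < M / m * (\<epsilon> * sqrt (m / M))\<^sup>2"
      using y \<open>0 < m\<close> \<open>0 < M\<close> by (intro mult_strict_left_mono power_strict_mono) auto
    also have "\<dots> = \<epsilon>\<^sup>2"
      using \<open>0 < m\<close> \<open>0 < M\<close> by (simp add: power_mult_distrib)
    finally have "(norm (y t))\<^sup>2 < \<epsilon>\<^sup>2"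
      using norm_le[of y t] y \<open>0 \<le> t\<close> \<open>0 < m\<close> \<open>0 < M\<close> \<open>0 < k\<close>
        mult_left_le_one_le[of "M / m * (norm (y 0))\<^sup>2" "exp (- (k / M) * t)"]
      by simp
    then show "norm (y t) < \<epsilon>"
      using \<open>0 < \<epsilon>\<close> by (simp add: power_less_imp_less_base)
  qed
  have attractive: "(y \<longlongrightarrow> 0) at_top" if "lin_solution A y" for y
  proof (rule Lim_null_comparison)
    let ?C = "M / m * (norm (y 0))\<^sup>2"
    show "\<forall>\<^sub>F t in at_top. norm (y t) \<le> sqrt (exp (- (k / M) * t) * ?C)"
      using eventually_ge_at_top[of "0::real"]
      by eventually_elim (use norm_le[OF that] in \<open>auto intro: real_le_rsqrt\<close>)
    have "((\<lambda>t. sqrt (exp (- (k / M) * t) * ?C)) \<longlongrightarrow> sqrt (0 * ?C)) at_top"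
      using \<open>0 < k\<close> \<open>0 < M\<close> by (intro tendsto_intros exp_neg_mult_tendsto_zero) simp
    then show "((\<lambda>t. sqrt (exp (- (k / M) * t) * ?C)) \<longlongrightarrow> 0) at_top" by simp
  qed
  show ?thesis
    unfolding asymptotically_stable_origin_def using stable attractive by (auto intro: exI[of _ 1])
qed

section \<open>Estimates for a single converter unit\<close>

lemma min3_mult_sum_le:
  fixes \<alpha> \<beta> \<gamma> x y z :: real
  assumes "0 \<le> x" "0 \<le> y" "0 \<le> z"
  shows "min \<alpha> (min \<beta> \<gamma>) * (x + y + z) \<le> \<alpha> * x + \<beta> * y + \<gamma> * z"
proof -
  have "min \<alpha> (min \<beta> \<gamma>) \<le> \<alpha>" "min \<alpha> (min \<beta> \<gamma>) \<le> \<beta>" "min \<alpha> (min \<beta> \<gamma>) \<le> \<gamma>"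
    by simp_all
  then show ?thesis
    using assms by (simp add: distrib_left add_mono mult_right_mono)
qed

lemma max3_mult_sum_ge:
  fixes \<alpha> \<beta> \<gamma> x y z :: real
  assumes "0 \<le> x" "0 \<le> y" "0 \<le> z"
  shows "\<alpha> * x + \<beta> * y + \<gamma> * z \<le> max \<alpha> (max \<beta> \<gamma>) * (x + y + z)"
proof -
  have "\<alpha> \<le> max \<alpha> (max \<beta> \<gamma>)" "\<beta> \<le> max \<alpha> (max \<beta> \<gamma>)" "\<gamma> \<le> max \<alpha> (max \<beta> \<gamma>)"
    by simp_all
  then show ?thesis
    using assms by (simp add: distrib_left add_mono mult_right_mono)
qed

lemma cross_term_bounds:
  fixes L g e c z :: real
  assumes "0 < L" "4 * e\<^sup>2 * L \<le> g"
  shows "L * c\<^sup>2 / 2 + g * z\<^sup>2 / 2 \<le> L * c\<^sup>2 + g * z\<^sup>2 - 2 * e * L * c * z"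
    and "L * c\<^sup>2 + g * z\<^sup>2 - 2 * e * L * c * z \<le> 3 * L * c\<^sup>2 / 2 + 3 * g * z\<^sup>2 / 2"
proof -
  have "0 \<le> L * (c / 2 - e * z)\<^sup>2" "0 \<le> L * (c / 2 + e * z)\<^sup>2"
    using assms by simp_all
  moreover have "4 * e\<^sup>2 * L * z\<^sup>2 \<le> g * z\<^sup>2"
    using assms by (simp add: mult_right_mono)
  ultimately show "L * c\<^sup>2 / 2 + g * z\<^sup>2 / 2 \<le> L * c\<^sup>2 + g * z\<^sup>2 - 2 * e * L * c * z"
    and "L * c\<^sup>2 + g * z\<^sup>2 - 2 * e * L * c * z \<le> 3 * L * c\<^sup>2 / 2 + 3 * g * z\<^sup>2 / 2"
    by (simp_all add: power2_eq_square algebra_simps)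
qed

lemma unit_energy_bounds:
  fixes C L g a e v c z :: real
  assumes "0 < C" "0 < L" "0 < g" "0 < a" "4 * e\<^sup>2 * L \<le> g"
  shows "min (C / 2) (min (L / (4 * a)) (g / (4 * a))) * (v\<^sup>2 + c\<^sup>2 + z\<^sup>2)
      \<le> C * v\<^sup>2 / 2 + (L * c\<^sup>2 + g * z\<^sup>2 - 2 * e * L * c * z) / (2 * a)"
    and "C * v\<^sup>2 / 2 + (L * c\<^sup>2 + g * z\<^sup>2 - 2 * e * L * c * z) / (2 * a)
      \<le> max (C / 2) (max (3 * L / (4 * a)) (3 * g / (4 * a))) * (v\<^sup>2 + c\<^sup>2 + z\<^sup>2)"
proof -
  have "(L * c\<^sup>2 / 2 + g * z\<^sup>2 / 2) / (2 * a) \<le> (L * c\<^sup>2 + g * z\<^sup>2 - 2 * e * L * c * z) / (2 * a)"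
    "(L * c\<^sup>2 + g * z\<^sup>2 - 2 * e * L * c * z) / (2 * a) \<le> (3 * L * c\<^sup>2 / 2 + 3 * g * z\<^sup>2 / 2) / (2 * a)"
    using cross_term_bounds[OF \<open>0 < L\<close> \<open>4 * e\<^sup>2 * L \<le> g\<close>, of c z] \<open>0 < a\<close>
    by (simp_all add: divide_right_mono)
  moreover have "(L * c\<^sup>2 / 2 + g * z\<^sup>2 / 2) / (2 * a) = L / (4 * a) * c\<^sup>2 + g / (4 * a) * z\<^sup>2"
    "(3 * L * c\<^sup>2 / 2 + 3 * g * z\<^sup>2 / 2) / (2 * a) = 3 * L / (4 * a) * c\<^sup>2 + 3 * g / (4 * a) * z\<^sup>2"
    by (simp_all add: add_divide_distrib)
  ultimately show "min (C / 2) (min (L / (4 * a)) (g / (4 * a))) * (v\<^sup>2 + c\<^sup>2 + z\<^sup>2)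
      \<le> C * v\<^sup>2 / 2 + (L * c\<^sup>2 + g * z\<^sup>2 - 2 * e * L * c * z) / (2 * a)"
    and "C * v\<^sup>2 / 2 + (L * c\<^sup>2 + g * z\<^sup>2 - 2 * e * L * c * z) / (2 * a)
      \<le> max (C / 2) (max (3 * L / (4 * a)) (3 * g / (4 * a))) * (v\<^sup>2 + c\<^sup>2 + z\<^sup>2)"
    using min3_mult_sum_le[of "v\<^sup>2" "c\<^sup>2" "z\<^sup>2" "C / 2" "L / (4 * a)" "g / (4 * a)"]
      max3_mult_sum_ge[of "v\<^sup>2" "c\<^sup>2" "z\<^sup>2" "C / 2" "3 * L / (4 * a)" "3 * g / (4 * a)"]
    by (simp_all add: mult.commute)
qed

lemma unit_dissipation_le:
  fixes RL a b g L e v c z :: real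
  assumes "0 < RL" "0 < a" "0 \<le> b" "0 \<le> e" "4 * e * L \<le> b" "e * (RL * a + 2 * b) \<le> g"
  shows "- (v\<^sup>2 / RL) - b * c\<^sup>2 / a + e * (a * v * z + b * c * z - g * z\<^sup>2 + L * c\<^sup>2) / a
    \<le> - (1 / (2 * RL) * v\<^sup>2 + b / (2 * a) * c\<^sup>2 + e * g / (2 * a) * z\<^sup>2)"
proof -
  let ?N = "- (b * c\<^sup>2) + e * b * c * z - e * g * z\<^sup>2 + e * L * c\<^sup>2"
  let ?B = "- (b * c\<^sup>2 / (2 * a)) - e * g * z\<^sup>2 / (2 * a) - e * (e * RL) * z\<^sup>2 / 2"
  have "(v - e * RL * z)\<^sup>2 / (2 * RL) = v\<^sup>2 / (2 * RL) - e * v * z + e * (e * RL) * z\<^sup>2 / 2"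
    using assms by (simp add: power2_eq_square field_simps)
  moreover have "0 \<le> (v - e * RL * z)\<^sup>2 / (2 * RL)"
    using assms by simp
  ultimately have v_term: "e * v * z \<le> v\<^sup>2 / (2 * RL) + e * (e * RL) * z\<^sup>2 / 2"
    by linarith
  have "0 \<le> b * (c / 2 - e * z)\<^sup>2"
    using assms by simp
  then have "e * b * c * z \<le> b * c\<^sup>2 / 4 + e * (e * b) * z\<^sup>2"
    by (simp add: power2_eq_square algebra_simps)
  moreover have "e * L * c\<^sup>2 \<le> b * c\<^sup>2 / 4"
    using mult_right_mono[OF \<open>4 * e * L \<le> b\<close>, of "c\<^sup>2"] by simp
  moreover have "e * (e * (RL * a + 2 * b)) * z\<^sup>2 \<le> e * g * z\<^sup>2"
    using assms by (simp add: mult_left_mono mult_right_mono)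
  then have "e * (e * RL * a) * z\<^sup>2 + 2 * (e * (e * b) * z\<^sup>2) \<le> e * g * z\<^sup>2"
    by (simp add: algebra_simps)
  moreover have "a * ?B = - (b * c\<^sup>2) / 2 - e * g * z\<^sup>2 / 2 - e * (e * RL * a) * z\<^sup>2 / 2"
    using assms by (simp add: field_simps)
  ultimately have "?N \<le> a * ?B"
    by linarith
  then have "?N / a \<le> ?B"
    using assms by (simp add: pos_divide_le_eq mult.commute)
  moreover have "- (v\<^sup>2 / RL) - b * c\<^sup>2 / a + e * (a * v * z + b * c * z - g * z\<^sup>2 + L * c\<^sup>2) / a
      = - (v\<^sup>2 / RL) + e * v * z + ?N / a"
    using assms by (simp add: field_simps)
  ultimately show ?thesis
    using v_term by simp
qed

section \<open>The converter network\<close>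

lemma sum_UNIV_3: "(\<Sum>b\<in>UNIV. f b) = f 0 + f 1 + f (2::3)"
proof -
  have "(3::3) = 0" by simp
  then have "f 3 = f 0" by (rule arg_cong)
  then show ?thesis by (simp add: sum_3 ac_simps)
qed

lemma sum_UNIV_prod: "(\<Sum>p\<in>UNIV. f p) = (\<Sum>i\<in>UNIV. \<Sum>b\<in>UNIV. f (i, b))"
  unfolding sum.cartesian_product by simp

lemma norm_vec_prod_3_squared:
  fixes x :: "real ^ ('n::finite \<times> 3)"
  shows "(norm x)\<^sup>2 = (\<Sum>i\<in>UNIV. (x $ (i, 0))\<^sup>2 + (x $ (i, 1))\<^sup>2 + (x $ (i, 2))\<^sup>2)"
  unfolding norm_vec_def L2_set_def by (simp add: sum_nonneg sum_UNIV_prod sum_UNIV_3)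

lemma FC_mult_vector:
  assumes "\<And>i. \<not> E i i"
  shows "(FC E Ct Lt Rt RL R k1 k2 k3 *v x) $ (i, a)
    = (\<Sum>b\<in>UNIV. blockF (Ct i) (Lt i) (Rt i) (k1 i) (k2 i) (k3 i) a b * x $ (i, b))
      - (if a = 0 then (1 / (RL i * Ct i) + (\<Sum>l\<in>{l. E i l}. 1 / (R i l * Ct i))) * x $ (i, 0)
         else 0)
      + (if a = 0 then (\<Sum>j\<in>{j. E i j}. x $ (j, 0) / (R i j * Ct i)) else 0)"
proof -
  let ?D = "1 / (RL i * Ct i) + (\<Sum>l\<in>{l. E i l}. 1 / (R i l * Ct i))"
  let ?S = "\<Sum>b\<in>UNIV. (blockF (Ct i) (Lt i) (Rt i) (k1 i) (k2 i) (k3 i) a b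
         - (if a = 0 \<and> b = 0 then ?D else 0)) * x $ (i, b)"
  have "(\<Sum>b\<in>UNIV. FC E Ct Lt Rt RL R k1 k2 k3 $ (i, a) $ (j, b) * x $ (j, b))
      = (if j = i then ?S else 0) + (if a = 0 \<and> E i j then x $ (j, 0) / (R i j * Ct i) else 0)" for j
    using assms[of i]
    by (cases "j = i"; cases "a = 0 \<and> E i j")
      (auto simp: FC_def Let_def if_distrib[of "\<lambda>r. r * _"] cong: if_cong)
  then have "(FC E Ct Lt Rt RL R k1 k2 k3 *v x) $ (i, a)
      = (\<Sum>j\<in>UNIV. (if j = i then ?S else 0)
          + (if a = 0 \<and> E i j then x $ (j, 0) / (R i j * Ct i) else 0))"
    unfolding matrix_vector_mult_def sum_UNIV_prod by simp
  also have "\<dots> = ?S + (if a = 0 then (\<Sum>j\<in>{j. E i j}. x $ (j, 0) / (R i j * Ct i)) else 0)"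
    by (simp add: sum.distrib sum.If_cases)
  also have "?S = (\<Sum>b\<in>UNIV. blockF (Ct i) (Lt i) (Rt i) (k1 i) (k2 i) (k3 i) a b * x $ (i, b))
      - (if a = 0 then ?D * x $ (i, 0) else 0)"
    by (simp add: left_diff_distrib sum_subtractf if_distrib[of "\<lambda>r. r * _"] cong: if_cong)
  finally show ?thesis by simp
qed

lemma finite_pos_lower_bound:
  fixes c :: "'i::finite \<Rightarrow> real"
  assumes "\<And>i. 0 < c i"
  obtains m where "0 < m" "\<And>i. m \<le> c i"
proof
  show "0 < Min (range c)" using assms by simp
qed simp

lemma has_derivative_vec_nth [derivative_intros]:
  "((\<lambda>x. x $ p) has_derivative (\<lambda>h. h $ p)) F"
  using bounded_linear_vec_nth by (rule bounded_linear_imp_has_derivative)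

lemma laplacian_form_nonpos:
  fixes v :: "'n::finite \<Rightarrow> real"
  assumes sym: "\<And>i j. E i j \<Longrightarrow> E j i"
    and R_sym: "\<And>i j. E i j \<Longrightarrow> R i j = R j i"
    and R_pos: "\<And>i j. E i j \<Longrightarrow> 0 < R i j"
  shows "(\<Sum>i\<in>UNIV. v i * (\<Sum>j\<in>{j. E i j}. (v j - v i) / R i j)) \<le> 0"
proof -
  define f where "f i j = (if E i j then v i * (v j - v i) / R i j else 0)" for i j
  have "(\<Sum>i\<in>UNIV. v i * (\<Sum>j\<in>{j. E i j}. (v j - v i) / R i j)) = (\<Sum>i\<in>UNIV. \<Sum>j\<in>UNIV. f i j)"
    unfolding f_def by (simp add: sum_distrib_left sum.If_cases)
  moreover have "2 * (\<Sum>i\<in>UNIV. \<Sum>j\<in>UNIV. f i j) = (\<Sum>i\<in>UNIV. \<Sum>j\<in>UNIV. f i j + f j i)"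
    using sum.swap[of f UNIV UNIV] by (simp add: sum.distrib)
  moreover have "f i j + f j i = (if E i j then - ((v i - v j)\<^sup>2 / R i j) else 0)" for i j
    using sym[of i j] sym[of j i] R_sym[of i j]
    by (auto simp: f_def power2_eq_square add_divide_distrib[symmetric] minus_divide_left algebra_simps)
  moreover have "(\<Sum>i\<in>UNIV. \<Sum>j\<in>UNIV. if E i j then - ((v i - v j)\<^sup>2 / R i j) else 0) \<le> 0"
    using R_pos by (intro sum_nonpos) (simp add: less_imp_le)
  ultimately show ?thesis by simp
qed

locale converter_network =
  fixes E :: "'n::finite \<Rightarrow> 'n \<Rightarrow> bool"
    and Ct Lt Rt RL k1 k2 k3 :: "'n \<Rightarrow> real"
    and R :: "'n \<Rightarrow> 'n \<Rightarrow> real"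
  assumes sym: "\<And>i j. E i j \<Longrightarrow> E j i"
    and irrefl: "\<And>i. \<not> E i i"
    and Ct_pos: "\<And>i. 0 < Ct i" and Lt_pos: "\<And>i. 0 < Lt i" and RL_pos: "\<And>i. 0 < RL i"
    and R_sym: "\<And>i j. E i j \<Longrightarrow> R i j = R j i"
    and R_pos: "\<And>i j. E i j \<Longrightarrow> 0 < R i j"
    and k1_less: "\<And>i. k1 i < 1" and k2_less: "\<And>i. k2 i < Rt i" and k3_pos: "\<And>i. 0 < k3 i"
begin

abbreviation F :: "real ^ ('n \<times> 3) ^ ('n \<times> 3)" where
  "F \<equiv> FC E Ct Lt Rt RL R k1 k2 k3"

definition a :: "'n \<Rightarrow> real" where "a i = 1 - k1 i"
definition b :: "'n \<Rightarrow> real" where "b i = Rt i - k2 i"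

lemma a_pos: "0 < a i" and b_pos: "0 < b i"
  using k1_less[of i] k2_less[of i] by (simp_all add: a_def b_def)

lemma F_mult_vector_0:
  "Ct i * (F *v x) $ (i, 0)
    = x $ (i, 1) - x $ (i, 0) / RL i + (\<Sum>j\<in>{j. E i j}. (x $ (j, 0) - x $ (i, 0)) / R i j)"
proof -
  let ?S1 = "\<Sum>l\<in>{l. E i l}. 1 / R i l" and ?S2 = "\<Sum>j\<in>{j. E i j}. x $ (j, 0) / R i j"
  have "(\<Sum>l\<in>{l. E i l}. 1 / (R i l * Ct i)) = ?S1 / Ct i"
    "(\<Sum>j\<in>{j. E i j}. x $ (j, 0) / (R i j * Ct i)) = ?S2 / Ct i"
    by (simp_all add: sum_divide_distrib)
  then have "(F *v x) $ (i, 0)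
      = x $ (i, 1) / Ct i - (1 / (RL i * Ct i) + ?S1 / Ct i) * x $ (i, 0) + ?S2 / Ct i"
    by (simp add: FC_mult_vector[OF irrefl] sum_UNIV_3 blockF_def)
  moreover have "(\<Sum>j\<in>{j. E i j}. (x $ (j, 0) - x $ (i, 0)) / R i j) = ?S2 - x $ (i, 0) * ?S1"
    by (simp add: diff_divide_distrib sum_subtractf sum_distrib_left)
  ultimately show ?thesis
    using Ct_pos[of i] by (simp add: field_simps)
qed

lemma F_mult_vector_1: "Lt i * (F *v x) $ (i, 1) = - a i * x $ (i, 0) - b i * x $ (i, 1) + k3 i * x $ (i, 2)"
  using Lt_pos[of i]
  by (simp add: FC_mult_vector[OF irrefl] sum_UNIV_3 blockF_def a_def b_def field_simps)

lemma F_mult_vector_2: "(F *v x) $ (i, 2) = - x $ (i, 1)"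
  by (simp add: FC_mult_vector[OF irrefl] sum_UNIV_3 blockF_def)

definition e :: "'n \<Rightarrow> real" where
  "e i = min (b i / (4 * Lt i)) (k3 i / (RL i * a i + 2 * b i))"

lemma RL_a_b_pos: "0 < RL i * a i + 2 * b i"
  using RL_pos[of i] a_pos[of i] b_pos[of i] by (intro add_pos_pos mult_pos_pos) simp_all

lemma e_pos: "0 < e i"
  using RL_a_b_pos[of i] b_pos[of i] Lt_pos[of i] k3_pos[of i] by (simp add: e_def)

lemma e_le: "4 * e i * Lt i \<le> b i" "e i * (RL i * a i + 2 * b i) \<le> k3 i"
proof -
  have "e i \<le> b i / (4 * Lt i)" "e i \<le> k3 i / (RL i * a i + 2 * b i)"
    by (simp_all add: e_def)
  then show "4 * e i * Lt i \<le> b i" "e i * (RL i * a i + 2 * b i) \<le> k3 i"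
    using RL_a_b_pos[of i] Lt_pos[of i] by (simp_all add: pos_le_divide_eq ac_simps)
qed

lemma e_squared_le: "4 * (e i)\<^sup>2 * Lt i \<le> k3 i"
proof -
  have "4 * (e i)\<^sup>2 * Lt i = e i * (4 * e i * Lt i)" by (simp add: power2_eq_square)
  also have "\<dots> \<le> e i * (RL i * a i + 2 * b i)"
  proof (rule mult_left_mono)
    have "0 \<le> RL i * a i" using RL_pos[of i] a_pos[of i] by simp
    then show "4 * e i * Lt i \<le> RL i * a i + 2 * b i" using e_le(1)[of i] b_pos[of i] by linarith
  qed (use e_pos[of i] in simp)
  also have "\<dots> \<le> k3 i" by (fact e_le(2))
  finally show ?thesis .
qed

definition unit_energy :: "'n \<Rightarrow> real \<Rightarrow> real \<Rightarrow> real \<Rightarrow> real" where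
  "unit_energy i v c z = Ct i * v\<^sup>2 / 2 + (Lt i * c\<^sup>2 + k3 i * z\<^sup>2 - 2 * e i * Lt i * c * z) / (2 * a i)"

definition energy :: "real ^ ('n \<times> 3) \<Rightarrow> real" where
  "energy x = (\<Sum>i\<in>UNIV. unit_energy i (x $ (i, 0)) (x $ (i, 1)) (x $ (i, 2)))"

definition energy' :: "real ^ ('n \<times> 3) \<Rightarrow> real ^ ('n \<times> 3) \<Rightarrow> real" where
  "energy' x h = (\<Sum>i\<in>UNIV. Ct i * x $ (i, 0) * h $ (i, 0)
     + (Lt i * x $ (i, 1) * h $ (i, 1) + k3 i * x $ (i, 2) * h $ (i, 2)
        - e i * Lt i * (h $ (i, 1) * x $ (i, 2) + x $ (i, 1) * h $ (i, 2))) / a i)"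

lemma energy_has_derivative: "(energy has_derivative energy' x) (at x)"
proof -
  have "a i \<noteq> 0" for i using a_pos[of i] by simp
  then show ?thesis
    unfolding energy_def [abs_def] energy'_def [abs_def] unit_energy_def
    by (auto intro!: derivative_eq_intros sum.cong simp: field_simps)
qed

lemma energy'_F_summand:
  fixes x :: "real ^ ('n \<times> 3)" and i :: 'n
  defines "v \<equiv> x $ (i, 0)" and "c \<equiv> x $ (i, 1)" and "z \<equiv> x $ (i, 2)" and "y \<equiv> F *v x"
  shows "Ct i * v * y $ (i, 0) + (Lt i * c * y $ (i, 1) + k3 i * z * y $ (i, 2)
        - e i * Lt i * (y $ (i, 1) * z + c * y $ (i, 2))) / a i
    = - (v\<^sup>2 / RL i) - b i * c\<^sup>2 / a i
      + e i * (a i * v * z + b i * c * z - k3 i * z\<^sup>2 + Lt i * c\<^sup>2) / a i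
      + v * (\<Sum>j\<in>{j. E i j}. (x $ (j, 0) - v) / R i j)"
proof -
  have "Ct i * v * y $ (i, 0) + (Lt i * c * y $ (i, 1) + k3 i * z * y $ (i, 2)
        - e i * Lt i * (y $ (i, 1) * z + c * y $ (i, 2))) / a i
    = v * (Ct i * y $ (i, 0)) + (c * (Lt i * y $ (i, 1)) + k3 i * z * y $ (i, 2)
        - e i * ((Lt i * y $ (i, 1)) * z + Lt i * c * y $ (i, 2))) / a i"
    by (simp add: algebra_simps)
  also have "\<dots> = v * (c - v / RL i + (\<Sum>j\<in>{j. E i j}. (x $ (j, 0) - v) / R i j))
      + (c * (- a i * v - b i * c + k3 i * z) + k3 i * z * (- c)
        - e i * ((- a i * v - b i * c + k3 i * z) * z + Lt i * c * (- c))) / a i"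
    unfolding y_def v_def c_def z_def F_mult_vector_0 F_mult_vector_1 F_mult_vector_2 ..
  also have "\<dots> = - (v\<^sup>2 / RL i) - b i * c\<^sup>2 / a i
      + e i * (a i * v * z + b i * c * z - k3 i * z\<^sup>2 + Lt i * c\<^sup>2) / a i
      + v * (\<Sum>j\<in>{j. E i j}. (x $ (j, 0) - v) / R i j)"
    using a_pos[of i] by (simp add: field_simps power2_eq_square)
  finally show ?thesis .
qed

lemma energy_dissipation:
  obtains k where "0 < k" "\<And>x. energy' x (F *v x) \<le> - k * (norm x)\<^sup>2"
proof -
  define \<kappa> where "\<kappa> i = min (1 / (2 * RL i)) (min (b i / (2 * a i)) (e i * k3 i / (2 * a i)))" for i
  have "0 < \<kappa> i" for i
    unfolding \<kappa>_def using RL_pos[of i] a_pos[of i] b_pos[of i] e_pos[of i] k3_pos[of i] by simp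
  then obtain k where "0 < k" and k_le: "\<And>i. k \<le> \<kappa> i"
    using finite_pos_lower_bound[of \<kappa>] by blast
  have "energy' x (F *v x) \<le> - k * (norm x)\<^sup>2" for x
  proof -
    define D where "D i = - ((x $ (i, 0))\<^sup>2 / RL i) - b i * (x $ (i, 1))\<^sup>2 / a i
      + e i * (a i * x $ (i, 0) * x $ (i, 2) + b i * x $ (i, 1) * x $ (i, 2) - k3 i * (x $ (i, 2))\<^sup>2
        + Lt i * (x $ (i, 1))\<^sup>2) / a i" for i
    have "D i \<le> - (k * ((x $ (i, 0))\<^sup>2 + (x $ (i, 1))\<^sup>2 + (x $ (i, 2))\<^sup>2))" for i
    proof -
      have "D i \<le> - (1 / (2 * RL i) * (x $ (i, 0))\<^sup>2 + b i / (2 * a i) * (x $ (i, 1))\<^sup>2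
          + e i * k3 i / (2 * a i) * (x $ (i, 2))\<^sup>2)"
        unfolding D_def using RL_pos a_pos b_pos e_pos e_le
        by (intro unit_dissipation_le) (auto intro: less_imp_le)
      moreover have "k * ((x $ (i, 0))\<^sup>2 + (x $ (i, 1))\<^sup>2 + (x $ (i, 2))\<^sup>2)
          \<le> \<kappa> i * ((x $ (i, 0))\<^sup>2 + (x $ (i, 1))\<^sup>2 + (x $ (i, 2))\<^sup>2)"
        using k_le by (intro mult_right_mono) auto
      moreover have "\<kappa> i * ((x $ (i, 0))\<^sup>2 + (x $ (i, 1))\<^sup>2 + (x $ (i, 2))\<^sup>2)
          \<le> 1 / (2 * RL i) * (x $ (i, 0))\<^sup>2 + b i / (2 * a i) * (x $ (i, 1))\<^sup>2
          + e i * k3 i / (2 * a i) * (x $ (i, 2))\<^sup>2"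
        unfolding \<kappa>_def by (rule min3_mult_sum_le) simp_all
      ultimately show ?thesis by linarith
    qed
    then have "(\<Sum>i\<in>UNIV. D i)
        \<le> (\<Sum>i\<in>UNIV. - (k * ((x $ (i, 0))\<^sup>2 + (x $ (i, 1))\<^sup>2 + (x $ (i, 2))\<^sup>2)))"
      by (rule sum_mono)
    also have "\<dots> = - k * (norm x)\<^sup>2"
      by (simp add: norm_vec_prod_3_squared sum_negf sum_distrib_left)
    moreover have "energy' x (F *v x)
        = (\<Sum>i\<in>UNIV. D i) + (\<Sum>i\<in>UNIV. x $ (i, 0) * (\<Sum>j\<in>{j. E i j}. (x $ (j, 0) - x $ (i, 0)) / R i j))"
      unfolding energy'_def energy'_F_summand D_def sum.distrib ..
    ultimately show ?thesis
      using laplacian_form_nonpos[where v = "\<lambda>i. x $ (i, 0)" and E = E and R = R, OF sym R_sym R_pos]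
      by linarith
  qed
  with \<open>0 < k\<close> show thesis by (rule that)
qed

lemma energy_bounds:
  obtains m M where "0 < m" "\<And>x. m * (norm x)\<^sup>2 \<le> energy x" "\<And>x. energy x \<le> M * (norm x)\<^sup>2"
proof -
  define \<mu> where "\<mu> i = min (Ct i / 2) (min (Lt i / (4 * a i)) (k3 i / (4 * a i)))" for i
  define \<nu> where "\<nu> i = max (Ct i / 2) (max (3 * Lt i / (4 * a i)) (3 * k3 i / (4 * a i)))" for i
  define M where "M = Max (range \<nu>)"
  have "0 < \<mu> i" for i
    unfolding \<mu>_def using Ct_pos[of i] Lt_pos[of i] a_pos[of i] k3_pos[of i] by simp
  then obtain m where "0 < m" and m_le: "\<And>i. m \<le> \<mu> i"
    using finite_pos_lower_bound[of \<mu>] by blast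
  note unit = unit_energy_bounds[OF Ct_pos Lt_pos k3_pos a_pos e_squared_le]
  let ?sq = "\<lambda>x i. (x $ (i, 0))\<^sup>2 + (x $ (i, 1))\<^sup>2 + (x $ (i, 2))\<^sup>2"
  let ?W = "\<lambda>x i. unit_energy i (x $ (i, 0)) (x $ (i, 1)) (x $ (i, 2))"
  have "m * (norm x)\<^sup>2 \<le> energy x" for x
    unfolding energy_def norm_vec_prod_3_squared sum_distrib_left
  proof (rule sum_mono)
    fix i
    have "m * ?sq x i \<le> \<mu> i * ?sq x i" using m_le by (intro mult_right_mono) auto
    also have "\<dots> \<le> ?W x i"
      unfolding \<mu>_def unit_energy_def by (rule unit(1))
    finally show "m * ?sq x i \<le> ?W x i" .
  qed
  moreover have "energy x \<le> M * (norm x)\<^sup>2" for x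
    unfolding energy_def norm_vec_prod_3_squared sum_distrib_left
  proof (rule sum_mono)
    fix i
    have "?W x i \<le> \<nu> i * ?sq x i"
      unfolding \<nu>_def unit_energy_def by (rule unit(2))
    also have "\<dots> \<le> M * ?sq x i" unfolding M_def by (intro mult_right_mono) auto
    finally show "?W x i \<le> M * ?sq x i" .
  qed
  ultimately show thesis using \<open>0 < m\<close> that by blast
qed

theorem asymptotically_stable: "asymptotically_stable_origin F"
proof -
  obtain m M where "0 < m" "\<And>x. m * (norm x)\<^sup>2 \<le> energy x" "\<And>x. energy x \<le> M * (norm x)\<^sup>2"
    using energy_bounds by blast
  moreover obtain k where "0 < k" "\<And>x. energy' x (F *v x) \<le> - k * (norm x)\<^sup>2"
    using energy_dissipation by blast
  ultimately show ?thesis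
    by (intro asymptotically_stable_originI[where W = energy and W' = energy'] energy_has_derivative)
qed

end

theorem theorem1:
  fixes E :: "'n::finite \<Rightarrow> 'n \<Rightarrow> bool"
    and Ct Lt Rt RL k1 k2 k3 :: "'n \<Rightarrow> real"
    and R :: "'n \<Rightarrow> 'n \<Rightarrow> real"
  assumes sym: "\<And>i j. E i j \<Longrightarrow> E j i"
    and irrefl: "\<And>i. \<not> E i i"
    and connected: "\<And>i j. E\<^sup>*\<^sup>* i j"
    and Ct_pos: "\<And>i. Ct i > 0" and Lt_pos: "\<And>i. Lt i > 0"
    and Rt_pos: "\<And>i. Rt i > 0" and RL_pos: "\<And>i. RL i > 0"
    and R_sym: "\<And>i j. E i j \<Longrightarrow> R i j = R j i"
    and R_pos: "\<And>i j. E i j \<Longrightarrow> R i j > 0"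
    and k1: "\<And>i. k1 i < 1" and k2: "\<And>i. k2 i < Rt i" and k3: "\<And>i. k3 i > 0"
  shows "asymptotically_stable_origin (FC E Ct Lt Rt RL R k1 k2 k3)"
proof -
  interpret converter_network E Ct Lt Rt RL k1 k2 k3 R
    using sym irrefl Ct_pos Lt_pos RL_pos R_sym R_pos k1 k2 k3 by unfold_locales
  show ?thesis by (fact asymptotically_stable)
qed

end
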